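(* Let $E\subseteq\mathbb{R}^d$ be a compact convex set and let $\alpha:[0,L]\to\mathbb{R}^d$ be a rectifiable curve with length $\ell(\alpha)$. Let $F\subseteq[0,L]$ be a finite set and $E_F=\bigcup_{t\in F}(E+\alpha(t))$. Then $|E_F|\le|E|+\ell(\alpha)\,\Delta_E$.
   Context: $|\cdot|$ denotes Lebesgue measure. $\Delta_E=\sup_{q\in\mathbb{R}^d\setminus\{0\}}|\mathcal{P}_{q^\perp}E|$, where $\mathcal{P}_{q^\perp}$ is the orthogonal projection onto the hyperplane $q^\perp=\{x:\langle x,q\rangle=0\}$ and the measure of the projection is $(d-1)$-dimensional. *)

theory Defs
  imports "HOL-Analysis.Analysis"
begin

definition hyperplane_proj :: "'a::euclidean_space \<Rightarrow> 'a \<Rightarrow> 'a" where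
  "hyperplane_proj q x = x - ((x \<bullet> q) / (q \<bullet> q)) *\<^sub>R q"

text \<open>(d-1)-dimensional Lebesgue measure of a set S contained in the hyperplane
  orthogonal to q: by Fubini it equals the d-dimensional Lebesgue measure of the
  right prism of height 1 over S in the unit normal direction.\<close>
definition hyperplane_measure :: "'a::euclidean_space \<Rightarrow> 'a set \<Rightarrow> real" where
  "hyperplane_measure q S =
     measure lebesgue {x + s *\<^sub>R (q /\<^sub>R norm q) | x s. x \<in> S \<and> s \<in> {0..1}}"

definition Delta :: "'a::euclidean_space set \<Rightarrow> real" where
  "Delta E = (SUP q\<in>UNIV - {0}. hyperplane_measure q (hyperplane_proj q ` E))"

definition polygon_lengths :: "(real \<Rightarrow> 'a::euclidean_space) \<Rightarrow> real \<Rightarrow> real \<Rightarrow> real set" where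
  "polygon_lengths \<alpha> a b =
     {(\<Sum>i<n. dist (\<alpha> (t (Suc i))) (\<alpha> (t i))) | n t.
        t 0 = a \<and> t n = b \<and> (\<forall>i<n. t i \<le> t (Suc i))}"

definition rectifiable_curve :: "(real \<Rightarrow> 'a::euclidean_space) \<Rightarrow> real \<Rightarrow> real \<Rightarrow> bool" where
  "rectifiable_curve \<alpha> a b \<longleftrightarrow> continuous_on {a..b} \<alpha> \<and> bdd_above (polygon_lengths \<alpha> a b)"

definition curve_length :: "(real \<Rightarrow> 'a::euclidean_space) \<Rightarrow> real \<Rightarrow> real \<Rightarrow> real" where
  "curve_length \<alpha> a b = Sup (polygon_lengths \<alpha> a b)"

end

theory Submission
  imports Defs
begin

text \<open>Walk through the points of \<open>F\<close> in increasing order: each new translate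
  \<open>E + \<alpha>(t')\<close> enlarges the union by at most \<open>|(E + w) - E|\<close>, where
  \<open>w = \<alpha>(t') - \<alpha>(t)\<close> for the previous point \<open>t\<close>. For convex \<open>E\<close> the translates of
  \<open>(E + w) - E\<close> by the multiples \<open>j w\<close> are pairwise disjoint, and the first \<open>N\<close> of them
  lie in a prism of height about \<open>N |w| + diam E\<close> over the projection of \<open>E\<close> onto
  \<open>w\<^sup>\<bottom>\<close>; letting \<open>N \<rightarrow> \<infinity>\<close> gives \<open>|(E + w) - E| \<le> |w| \<Delta>\<^sub>E\<close>. Summing over
  consecutive points bounds \<open>|E\<^sub>F|\<close> by \<open>|E|\<close> plus \<open>\<Delta>\<^sub>E\<close> times the length of an
  inscribed polygon, which is at most \<open>\<ell>(\<alpha>)\<close>.\<close>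

lemma mem_translate_iff:
  fixes a :: "'a::ab_group_add"
  shows "y \<in> (\<lambda>x. x + a) ` A \<longleftrightarrow> y - a \<in> A"
  by (auto simp: image_iff intro!: bexI[of _ "y - a"])

lemma translate_diff_translate:
  fixes a b :: "'a::ab_group_add"
  shows "(\<lambda>x. x + b) ` E - (\<lambda>x. x + a) ` E = (\<lambda>x. x + a) ` ((\<lambda>x. x + (b - a)) ` E - E)"
  by (auto simp: mem_translate_iff algebra_simps)

lemma measure_translate [simp]:
  fixes a :: "'a::euclidean_space"
  shows "measure lebesgue ((\<lambda>x. x + a) ` S) = measure lebesgue S"
  using measure_translation[of a S] by (simp add: add.commute)

lemma lmeasurable_translate:
  fixes a :: "'a::euclidean_space"
  shows "S \<in> lmeasurable \<Longrightarrow> (\<lambda>x. x + a) ` S \<in> lmeasurable"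
  using measurable_translation[of S a] by (simp add: add.commute)

lemma compact_translate:
  fixes a :: "'a::real_normed_vector"
  shows "compact S \<Longrightarrow> compact ((\<lambda>x. x + a) ` S)"
  using compact_translation[of S a] by (simp add: add.commute)

definition prism :: "'a::real_vector set \<Rightarrow> 'a \<Rightarrow> real set \<Rightarrow> 'a set" where
  "prism S u I = {x + s *\<^sub>R u | x s. x \<in> S \<and> s \<in> I}"

lemma prism_memI: "x \<in> S \<Longrightarrow> s \<in> I \<Longrightarrow> x + s *\<^sub>R u \<in> prism S u I"
  by (auto simp: prism_def)

lemma prism_mono: "I \<subseteq> J \<Longrightarrow> prism S u I \<subseteq> prism S u J"
  by (auto simp: prism_def)

lemma compact_prism:
  fixes S :: "'a::real_normed_vector set"
  assumes "compact S" and "compact I"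
  shows "compact (prism S u I)"
proof -
  have "prism S u I = (\<lambda>(x, s). x + s *\<^sub>R u) ` (S \<times> I)"
    by (force simp: prism_def)
  moreover have "compact ((\<lambda>(x, s). x + s *\<^sub>R u) ` (S \<times> I))"
    by (intro compact_continuous_image compact_Times assms)
       (auto intro!: continuous_intros simp: case_prod_unfold)
  ultimately show ?thesis by simp
qed

lemma prism_subset_Union_unit_prisms:
  "prism S u {a..a + real K + 1} \<subseteq> (\<Union>m\<le>K. (\<lambda>x. x + (a + real m) *\<^sub>R u) ` prism S u {0..1})"
proof
  fix y assume "y \<in> prism S u {a..a + real K + 1}"
  then obtain x s where y: "y = x + s *\<^sub>R u" and x: "x \<in> S" and s: "a \<le> s" "s \<le> a + real K + 1"
    by (auto simp: prism_def)
  define m where "m = min K (nat \<lfloor>s - a\<rfloor>)"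
  have "m \<le> K" by (simp add: m_def)
  moreover have "0 \<le> s - a - real m" "s - a - real m \<le> 1"
    using s by (auto simp: m_def min_def not_le) linarith+
  then have "x + (s - a - real m) *\<^sub>R u \<in> prism S u {0..1}"
    using x by (intro prism_memI) auto
  moreover have "y = x + (s - a - real m) *\<^sub>R u + (a + real m) *\<^sub>R u"
    by (simp add: y algebra_simps)
  ultimately show "y \<in> (\<Union>m\<le>K. (\<lambda>x. x + (a + real m) *\<^sub>R u) ` prism S u {0..1})"
    by blast
qed

lemma measure_prism_le:
  fixes S :: "'a::euclidean_space set"
  assumes "compact S" and "a \<le> b"
  shows "measure lebesgue (prism S u {a..b}) \<le> (b - a + 1) * measure lebesgue (prism S u {0..1})"
proof -
  define K where "K = nat \<lfloor>b - a\<rfloor>"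
  define Q where "Q = prism S u {0..1}"
  have Q: "Q \<in> lmeasurable"
    unfolding Q_def by (intro lmeasurable_compact compact_prism assms) simp
  have U: "(\<Union>m\<le>K. (\<lambda>x. x + (a + real m) *\<^sub>R u) ` Q) \<in> lmeasurable"
    unfolding Q_def by (intro lmeasurable_compact compact_UN compact_translate compact_prism assms) auto
  have "b \<le> a + real K + 1" "real K \<le> b - a"
    using assms(2) by (auto simp: K_def) linarith
  then have "prism S u {a..b} \<subseteq> (\<Union>m\<le>K. (\<lambda>x. x + (a + real m) *\<^sub>R u) ` Q)"
    unfolding Q_def by (intro order_trans[OF prism_mono prism_subset_Union_unit_prisms]) auto
  then have "measure lebesgue (prism S u {a..b})
      \<le> measure lebesgue (\<Union>m\<le>K. (\<lambda>x. x + (a + real m) *\<^sub>R u) ` Q)"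
    using U lmeasurable_compact[OF compact_prism[OF assms(1) compact_Icc]]
    by (intro measure_mono_fmeasurable fmeasurableD)
  also have "\<dots> \<le> (\<Sum>m\<le>K. measure lebesgue ((\<lambda>x. x + (a + real m) *\<^sub>R u) ` Q))"
    using Q by (intro measure_UNION_le) (auto intro: fmeasurableD lmeasurable_translate)
  also have "\<dots> = (real K + 1) * measure lebesgue Q"
    by simp
  also have "\<dots> \<le> (b - a + 1) * measure lebesgue Q"
    using \<open>real K \<le> b - a\<close> by (intro mult_right_mono) auto
  finally show ?thesis unfolding Q_def .
qed

lemma hyperplane_measure_eq_prism:
  "hyperplane_measure q S = measure lebesgue (prism S (q /\<^sub>R norm q) {0..1})"
  by (simp add: hyperplane_measure_def prism_def)

lemma continuous_on_hyperplane_proj: "continuous_on S (hyperplane_proj q)"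
  unfolding hyperplane_proj_def divide_inverse by (intro continuous_intros)

lemma norm_hyperplane_proj_le: "norm (hyperplane_proj q x) \<le> norm x"
proof -
  define c where "c = (x \<bullet> q) / (q \<bullet> q)"
  have "(x - c *\<^sub>R q) \<bullet> (c *\<^sub>R q) = 0"
    by (cases "q = 0") (simp_all add: c_def algebra_simps inner_commute)
  then have "norm x ^ 2 = norm (x - c *\<^sub>R q) ^ 2 + norm (c *\<^sub>R q) ^ 2"
    using norm_add_Pythagorean[of "x - c *\<^sub>R q" "c *\<^sub>R q"] by (simp add: orthogonal_def)
  then have "norm (x - c *\<^sub>R q) ^ 2 \<le> norm x ^ 2"
    by simp
  then show ?thesis
    by (simp add: hyperplane_proj_def c_def power2_le_iff_abs_le)
qed

lemma hyperplane_proj_add_component: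
  "hyperplane_proj q x + (x \<bullet> (q /\<^sub>R norm q)) *\<^sub>R (q /\<^sub>R norm q) = x"
  by (cases "q = 0") (simp_all add: hyperplane_proj_def power2_norm_eq_inner[symmetric] power2_eq_square field_simps)

lemma convex_translate_diff_translates_disjnt:
  fixes E :: "'a::real_vector set"
  assumes "convex E" and "j + 1 \<le> k"
  shows "disjnt ((\<lambda>x. x + j *\<^sub>R v) ` ((\<lambda>x. x + v) ` E - E))
                ((\<lambda>x. x + k *\<^sub>R v) ` ((\<lambda>x. x + v) ` E - E))"
  unfolding disjnt_def
proof (rule equals0I)
  fix y assume "y \<in> (\<lambda>x. x + j *\<^sub>R v) ` ((\<lambda>x. x + v) ` E - E) \<inter>
                    (\<lambda>x. x + k *\<^sub>R v) ` ((\<lambda>x. x + v) ` E - E)"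
  then have a: "y - k *\<^sub>R v - v \<in> E" and b: "y - j *\<^sub>R v - v \<in> E" and out: "y - k *\<^sub>R v \<notin> E"
    by (auto simp: mem_translate_iff)
  define \<mu> where "\<mu> = 1 / (k - j)"
  have "0 \<le> \<mu>" "\<mu> \<le> 1" "\<mu> * (k - j) = 1"
    using assms(2) by (auto simp: \<mu>_def)
  have "(1 - \<mu>) *\<^sub>R (y - k *\<^sub>R v - v) + \<mu> *\<^sub>R (y - j *\<^sub>R v - v)
      = y - k *\<^sub>R v - v + (\<mu> * (k - j)) *\<^sub>R v"
    by (simp add: algebra_simps)
  also have "\<dots> = y - k *\<^sub>R v"
    using \<open>\<mu> * (k - j) = 1\<close> by simp
  finally show False
    using convexD[OF assms(1) a b, of "1 - \<mu>" \<mu>] \<open>0 \<le> \<mu>\<close> \<open>\<mu> \<le> 1\<close> out by simp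
qed

lemma translate_mem_prism_hyperplane_proj:
  fixes e v :: "'a::euclidean_space"
  assumes "e \<in> E" and "norm e \<le> R" and "0 \<le> c" and "c \<le> h"
  shows "e + c *\<^sub>R v \<in> prism (hyperplane_proj v ` E) (v /\<^sub>R norm v) {-R .. R + h * norm v}"
proof -
  define u where "u = v /\<^sub>R norm v"
  have "v = norm v *\<^sub>R u"
    by (cases "v = 0") (simp_all add: u_def)
  moreover have "hyperplane_proj v e + (e \<bullet> u) *\<^sub>R u = e"
    unfolding u_def by (rule hyperplane_proj_add_component)
  ultimately have "e + c *\<^sub>R v = hyperplane_proj v e + (e \<bullet> u + c * norm v) *\<^sub>R u"
    by (metis (no_types, lifting) add.assoc scaleR_add_left scaleR_scaleR)
  moreover have "norm u \<le> 1"
    by (cases "v = 0") (simp_all add: u_def)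
  then have "\<bar>e \<bullet> u\<bar> \<le> R"
    using Cauchy_Schwarz_ineq2[of e u] mult_left_le[of "norm u" "norm e"] assms(2) by simp
  moreover have "c * norm v \<le> h * norm v"
    using assms(4) by (simp add: mult_right_mono)
  moreover have "0 \<le> c * norm v"
    using assms(3) by simp
  ultimately have "e + c *\<^sub>R v \<in> prism (hyperplane_proj v ` E) u {-R .. R + h * norm v}"
    using assms(1) by (auto intro!: prism_memI)
  then show ?thesis
    by (simp add: u_def)
qed

lemma le_of_nat_mult_le_add_const:
  fixes a b c :: real
  assumes "\<And>N. real N * a \<le> c + real N * b"
  shows "a \<le> b"
proof (rule ccontr)
  assume "\<not> a \<le> b"
  obtain N :: nat where "c / (a - b) < real N"
    using reals_Archimedean2 by blast
  with \<open>\<not> a \<le> b\<close> have "c < real N * a - real N * b"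
    by (simp add: field_simps)
  with assms[of N] show False
    by linarith
qed

lemma lmeasurable_translate_diff:
  fixes E :: "'a::euclidean_space set"
  assumes "compact E"
  shows "(\<lambda>x. x + v) ` E - E \<in> lmeasurable"
  using lmeasurable_compact[OF assms]
  by (intro fmeasurable_Diff lmeasurable_compact compact_translate assms fmeasurableD)

lemma measure_Union_translates_translate_diff:
  fixes E :: "'a::euclidean_space set" and v :: 'a
  assumes "compact E" and "convex E"
  defines "D \<equiv> (\<lambda>x. x + v) ` E - E"
  shows "measure lebesgue (\<Union>j<N. (\<lambda>x. x + real j *\<^sub>R v) ` D) = real N * measure lebesgue D"
proof -
  define Dj where "Dj j = (\<lambda>x. x + real j *\<^sub>R v) ` D" for j
  have "disjnt (Dj j) (Dj k)" if "j < k" for j k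
    unfolding Dj_def D_def using that
    by (intro convex_translate_diff_translates_disjnt[OF assms(2)]) simp
  then have "disjoint_family_on Dj {..<N}"
    unfolding disjoint_family_on_def by (metis disjnt_def disjnt_sym linorder_neqE_nat)
  moreover have "Dj j \<in> lmeasurable" for j
    unfolding Dj_def D_def by (intro lmeasurable_translate lmeasurable_translate_diff assms(1))
  ultimately have "measure lebesgue (\<Union>j<N. Dj j) = (\<Sum>j<N. measure lebesgue (Dj j))"
    by (intro measure_finite_Union)
      (auto intro: fmeasurableD dest: fmeasurableD2 simp del: emeasure_completion)
  then show ?thesis
    by (simp add: Dj_def)
qed

lemma Union_translates_translate_diff_subset_prism:
  fixes E :: "'a::euclidean_space set"
  assumes "\<And>x. x \<in> E \<Longrightarrow> norm x \<le> R"
  shows "(\<Union>j<N. (\<lambda>x. x + real j *\<^sub>R v) ` ((\<lambda>x. x + v) ` E - E))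
           \<subseteq> prism (hyperplane_proj v ` E) (v /\<^sub>R norm v) {-R .. R + real N * norm v}"
proof
  fix y assume "y \<in> (\<Union>j<N. (\<lambda>x. x + real j *\<^sub>R v) ` ((\<lambda>x. x + v) ` E - E))"
  then obtain j where "j < N" and y: "y - real (Suc j) *\<^sub>R v \<in> E"
    by (auto simp: mem_translate_iff algebra_simps)
  then have "y - real (Suc j) *\<^sub>R v + real (Suc j) *\<^sub>R v
      \<in> prism (hyperplane_proj v ` E) (v /\<^sub>R norm v) {-R .. R + real N * norm v}"
    using assms by (intro translate_mem_prism_hyperplane_proj) auto
  then show "y \<in> prism (hyperplane_proj v ` E) (v /\<^sub>R norm v) {-R .. R + real N * norm v}"
    by simp
qed

lemma measure_translate_diff_le:
  fixes E :: "'a::euclidean_space set"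
  assumes "compact E" and "convex E"
  shows "measure lebesgue ((\<lambda>x. x + v) ` E - E)
           \<le> norm v * hyperplane_measure v (hyperplane_proj v ` E)"
proof -
  define D where "D = (\<lambda>x. x + v) ` E - E"
  define P where "P = hyperplane_proj v ` E"
  define Q where "Q = prism P (v /\<^sub>R norm v) {0..1}"
  obtain R where "0 \<le> R" and R: "\<And>x. x \<in> E \<Longrightarrow> norm x \<le> R"
    using compact_imp_bounded[OF assms(1)] unfolding bounded_pos by (meson less_imp_le)
  have "compact P"
    unfolding P_def by (intro compact_continuous_image continuous_on_hyperplane_proj assms(1))
  have "real N * measure lebesgue D \<le> (2 * R + 1) * measure lebesgue Q + real N * (norm v * measure lebesgue Q)"
    for N
  proof -
    have "(\<Union>j<N. (\<lambda>x. x + real j *\<^sub>R v) ` D) \<in> sets lebesgue"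
      unfolding D_def
      by (intro sets.finite_UN fmeasurableD lmeasurable_translate lmeasurable_translate_diff assms(1)) auto
    then have "real N * measure lebesgue D
        \<le> measure lebesgue (prism P (v /\<^sub>R norm v) {-R .. R + real N * norm v})"
      unfolding measure_Union_translates_translate_diff[OF assms, symmetric] D_def P_def
      using Union_translates_translate_diff_subset_prism[OF R] \<open>compact P\<close>
      by (intro measure_mono_fmeasurable lmeasurable_compact compact_prism) (auto simp: P_def)
    also have "\<dots> \<le> (R + real N * norm v - - R + 1) * measure lebesgue Q"
      unfolding Q_def using \<open>compact P\<close> \<open>0 \<le> R\<close> by (intro measure_prism_le) auto
    finally show ?thesis
      by (simp add: algebra_simps)
  qed
  then have "measure lebesgue D \<le> norm v * measure lebesgue Q"
    by (rule le_of_nat_mult_le_add_const)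
  then show ?thesis
    by (simp add: D_def P_def Q_def hyperplane_measure_eq_prism)
qed

lemma prism_subset_cball:
  fixes S :: "'a::real_normed_vector set"
  assumes "S \<subseteq> cball 0 R" and "norm u \<le> 1" and "I \<subseteq> {0..1}"
  shows "prism S u I \<subseteq> cball 0 (R + 1)"
proof
  fix y assume "y \<in> prism S u I"
  then obtain x s where y: "y = x + s *\<^sub>R u" and "x \<in> S" and "s \<in> I"
    by (auto simp: prism_def)
  then have "norm x \<le> R" "0 \<le> s" "s \<le> 1"
    using assms by auto
  moreover have "norm (s *\<^sub>R u) \<le> 1"
    using \<open>0 \<le> s\<close> \<open>s \<le> 1\<close> assms(2) by (simp add: mult_le_one)
  ultimately show "y \<in> cball 0 (R + 1)"
    using norm_triangle_ineq[of x "s *\<^sub>R u"] unfolding y mem_cball_0 by linarith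
qed

lemma hyperplane_measure_le_Delta:
  fixes E :: "'a::euclidean_space set"
  assumes "compact E" and "q \<noteq> 0"
  shows "hyperplane_measure q (hyperplane_proj q ` E) \<le> Delta E"
proof -
  obtain R where R: "\<And>x. x \<in> E \<Longrightarrow> norm x \<le> R"
    using compact_imp_bounded[OF assms(1)] unfolding bounded_iff by blast
  have "hyperplane_measure p (hyperplane_proj p ` E) \<le> measure lebesgue (cball (0::'a) (R + 1))" for p
  proof -
    have "hyperplane_proj p ` E \<subseteq> cball 0 R"
    proof (rule image_subsetI)
      fix x assume "x \<in> E"
      then show "hyperplane_proj p x \<in> cball 0 R"
        unfolding mem_cball_0 using R norm_hyperplane_proj_le[of p x] by (meson order_trans)
    qed
    moreover have "norm (p /\<^sub>R norm p) \<le> 1"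
      by (cases "p = 0") simp_all
    ultimately have "prism (hyperplane_proj p ` E) (p /\<^sub>R norm p) {0..1} \<subseteq> cball 0 (R + 1)"
      by (intro prism_subset_cball) auto
    moreover have "prism (hyperplane_proj p ` E) (p /\<^sub>R norm p) {0..1} \<in> lmeasurable"
      by (intro lmeasurable_compact compact_prism compact_continuous_image
            continuous_on_hyperplane_proj assms(1)) simp
    ultimately show ?thesis
      unfolding hyperplane_measure_eq_prism by (intro measure_mono_fmeasurable) (auto intro: fmeasurableD)
  qed
  then have "bdd_above ((\<lambda>q. hyperplane_measure q (hyperplane_proj q ` E)) ` (UNIV - {0}))"
    by (intro bdd_aboveI) auto
  then show ?thesis
    unfolding Delta_def using assms(2) by (intro cSUP_upper) auto
qed

lemma Delta_nonneg:
  fixes E :: "'a::euclidean_space set"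
  assumes "compact E"
  shows "0 \<le> Delta E"
proof -
  obtain b :: 'a where "b \<in> Basis"
    using nonempty_Basis by blast
  then have "0 \<le> hyperplane_measure b (hyperplane_proj b ` E)"
    by (simp add: hyperplane_measure_def)
  also have "\<dots> \<le> Delta E"
    using \<open>b \<in> Basis\<close> by (intro hyperplane_measure_le_Delta assms) auto
  finally show ?thesis .
qed

lemma measure_translate_diff_le_Delta:
  fixes E :: "'a::euclidean_space set"
  assumes "compact E" and "convex E"
  shows "measure lebesgue ((\<lambda>x. x + w) ` E - E) \<le> norm w * Delta E"
proof (cases "w = 0")
  case False
  then show ?thesis
    using measure_translate_diff_le[OF assms] hyperplane_measure_le_Delta[OF assms(1) False]
    by (meson mult_left_mono norm_ge_zero order_trans)
qed simp

lemma measure_Union_translates_le: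
  fixes E :: "'a::euclidean_space set" and p :: "nat \<Rightarrow> 'a"
  assumes "compact E" and "convex E"
  shows "measure lebesgue (\<Union>i\<le>n. (\<lambda>x. x + p i) ` E)
           \<le> measure lebesgue E + (\<Sum>i<n. dist (p (Suc i)) (p i)) * Delta E"
proof (induction n)
  case 0
  then show ?case by simp
next
  case (Suc n)
  define U where "U = (\<Union>i\<le>n. (\<lambda>x. x + p i) ` E)"
  define D where "D = (\<lambda>x. x + p (Suc n)) ` E - (\<lambda>x. x + p n) ` E"
  have lm: "(\<lambda>x. x + a) ` E \<in> lmeasurable" for a
    by (intro lmeasurable_compact compact_translate assms(1))
  have lmUN: "(\<Union>i\<le>m. (\<lambda>x. x + p i) ` E) \<in> lmeasurable" for m
    by (intro lmeasurable_compact compact_UN compact_translate assms(1)) auto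
  then have U: "U \<in> lmeasurable"
    unfolding U_def .
  have D: "D \<in> lmeasurable"
    unfolding D_def using lm by (intro fmeasurable_Diff fmeasurableD)
  have "(\<lambda>x. x + p n) ` E \<subseteq> U"
    unfolding U_def by blast
  then have "(\<Union>i\<le>Suc n. (\<lambda>x. x + p i) ` E) \<subseteq> U \<union> D"
    unfolding atMost_Suc UN_insert U_def[symmetric] D_def by blast
  then have "measure lebesgue (\<Union>i\<le>Suc n. (\<lambda>x. x + p i) ` E) \<le> measure lebesgue (U \<union> D)"
    using lmUN U D by (intro measure_mono_fmeasurable fmeasurableD fmeasurable.Un)
  also have "\<dots> \<le> measure lebesgue U + measure lebesgue D"
    using U D by (intro measure_Un_le fmeasurableD)
  finally have "measure lebesgue (\<Union>i\<le>Suc n. (\<lambda>x. x + p i) ` E)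
      \<le> measure lebesgue U + measure lebesgue D" .
  moreover have "measure lebesgue D = measure lebesgue ((\<lambda>x. x + (p (Suc n) - p n)) ` E - E)"
    unfolding D_def translate_diff_translate by (rule measure_translate)
  moreover have "\<dots> \<le> dist (p (Suc n)) (p n) * Delta E"
    unfolding dist_norm by (rule measure_translate_diff_le_Delta[OF assms])
  ultimately show ?case
    using Suc.IH unfolding U_def sum.lessThan_Suc distrib_right by linarith
qed

lemma finite_set_in_partition:
  fixes F :: "real set"
  assumes "finite F" and "F \<subseteq> {a..b}" and "a \<le> b"
  obtains n t where "t 0 = a" and "t n = b" and "\<And>i. i < n \<Longrightarrow> t i \<le> t (Suc i)"
    and "F \<subseteq> t ` {..n}"
proof
  define xs where "xs = sorted_list_of_set F"
  define t where "t i = (if i = 0 then a else if i \<le> length xs then xs ! (i - 1) else b)" for i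
  have xs: "sorted xs" "set xs = F"
    using assms(1) by (simp_all add: xs_def)
  then have in_ab: "xs ! i \<in> {a..b}" if "i < length xs" for i
    using assms(2) that nth_mem by blast
  show "t 0 = a" "t (Suc (length xs)) = b"
    by (simp_all add: t_def)
  show "t i \<le> t (Suc i)" if "i < Suc (length xs)" for i
    using that in_ab sorted_nth_mono[OF xs(1)] assms(3) by (auto simp: t_def not_le Suc_le_eq)
  show "F \<subseteq> t ` {..Suc (length xs)}"
  proof
    fix x assume "x \<in> F"
    then obtain k where "k < length xs" "x = xs ! k"
      using xs(2) by (metis in_set_conv_nth)
    then show "x \<in> t ` {..Suc (length xs)}"
      by (intro image_eqI[of _ _ "Suc k"]) (auto simp: t_def)
  qed
qed

lemma polygon_length_le_curve_length:
  assumes "rectifiable_curve \<alpha> a b" and "t 0 = a" and "t n = b"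
    and "\<And>i. i < n \<Longrightarrow> t i \<le> t (Suc i)"
  shows "(\<Sum>i<n. dist (\<alpha> (t (Suc i))) (\<alpha> (t i))) \<le> curve_length \<alpha> a b"
  unfolding curve_length_def
proof (rule cSup_upper)
  show "(\<Sum>i<n. dist (\<alpha> (t (Suc i))) (\<alpha> (t i))) \<in> polygon_lengths \<alpha> a b"
    unfolding polygon_lengths_def using assms(2-4) by blast
  show "bdd_above (polygon_lengths \<alpha> a b)"
    using assms(1) by (simp add: rectifiable_curve_def)
qed

theorem lemma4p5:
  fixes E :: "'a::euclidean_space set" and \<alpha> :: "real \<Rightarrow> 'a" and L :: real and F :: "real set"
  assumes "compact E" and "convex E"
    and "0 \<le> L" and "rectifiable_curve \<alpha> 0 L"
    and "finite F" and "F \<subseteq> {0..L}"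
  shows "measure lebesgue (\<Union>t\<in>F. (\<lambda>x. x + \<alpha> t) ` E)
           \<le> measure lebesgue E + curve_length \<alpha> 0 L * Delta E"
proof -
  obtain n t where t: "t 0 = 0" "t n = L" "\<And>i. i < n \<Longrightarrow> t i \<le> t (Suc i)"
    and F: "F \<subseteq> t ` {..n}"
    by (metis finite_set_in_partition[OF assms(5,6,3)])
  have EF: "(\<Union>s\<in>F. (\<lambda>x. x + \<alpha> s) ` E) \<in> lmeasurable"
    using assms(1,5) by (intro lmeasurable_compact compact_UN compact_translate) auto
  have Et: "(\<Union>i\<le>n. (\<lambda>x. x + \<alpha> (t i)) ` E) \<in> lmeasurable"
    using assms(1) by (intro lmeasurable_compact compact_UN compact_translate) auto
  have "(\<Union>s\<in>F. (\<lambda>x. x + \<alpha> s) ` E) \<subseteq> (\<Union>s\<in>t ` {..n}. (\<lambda>x. x + \<alpha> s) ` E)"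
    using F by (rule UN_mono) simp
  then have "(\<Union>s\<in>F. (\<lambda>x. x + \<alpha> s) ` E) \<subseteq> (\<Union>i\<le>n. (\<lambda>x. x + \<alpha> (t i)) ` E)"
    by (simp add: image_image)
  then have "measure lebesgue (\<Union>s\<in>F. (\<lambda>x. x + \<alpha> s) ` E)
      \<le> measure lebesgue (\<Union>i\<le>n. (\<lambda>x. x + \<alpha> (t i)) ` E)"
    using EF Et by (intro measure_mono_fmeasurable fmeasurableD)
  also have "\<dots> \<le> measure lebesgue E + (\<Sum>i<n. dist (\<alpha> (t (Suc i))) (\<alpha> (t i))) * Delta E"
    using measure_Union_translates_le[OF assms(1,2), where p = "\<lambda>i. \<alpha> (t i)"] by simp
  also have "\<dots> \<le> measure lebesgue E + curve_length \<alpha> 0 L * Delta E"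
    using polygon_length_le_curve_length[OF assms(4) t] Delta_nonneg[OF assms(1)]
    by (intro add_left_mono mult_right_mono)
  finally show ?thesis .
qed

end
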